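(* Let $q\ge 3$ be a prime power, $n\ge 2d\ge 2$, $0\le i\le d$, $1\le j\le d$, $h_{\max}=\min\{i,d-j\}$ and $c=g_{h_{\max}}(i,j)$. If it is not the case that ($n=2d$ and $d-j\le i$), then $$\tfrac49 q^{c}<|G_j(i)|<4q^{c}.$$ If $n=2d$ and $d-j\le i$, then $$1\ge \frac{|G_j(i)|}{|T_{d-j}(i,j)|}\ge \frac{5}{32}.$$
   Context: For integers $m\ge 0$ and $l$, ${m\brack l}=\prod_{t=1}^{l}\frac{q^{m-t+1}-1}{q^t-1}$ for $l\ge0$ and $0$ for $l<0$. For $0\le i,j\le d$, $$G_j(i)=\sum_{h=\max\{0,i-j\}}^{\min\{i,d-j\}}(-1)^{i-h}q^{j(j-i+h)+\binom{i-h}{2}}{i\brack h}{d-h\brack j}{n-d-i+h\brack n-d-j}$$ (the eigenvalues of the Grassmann graph $G_q(n,d,j)$), and $T_h(i,j)$ is the $h$-th summand (and $0$ for $h$ outside the summation range). Also $$g_h(i,j)=-\tfrac12h^2+h\left(n-d-j+\tfrac12\right)+j(d-j)+\tfrac{i(i-1)}{2}+(n-d)(j-i).$$ *)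

theory Defs
  imports Complex_Main "HOL-Number_Theory.Prime_Powers"
begin

definition gbinom :: "real \<Rightarrow> nat \<Rightarrow> int \<Rightarrow> real" where
  "gbinom q m l = (if l < 0 then 0 else
     (\<Prod>t\<in>{1..nat l}. (q ^ (m - t + 1) - 1) / (q ^ t - 1)))"

text \<open>Summation range of G_j(i): max{0,i-j} .. min{i,d-j}.\<close>
definition hrange :: "nat \<Rightarrow> nat \<Rightarrow> nat \<Rightarrow> nat set" where
  "hrange d i j = {i - j .. min i (d - j)}"

definition Tsum :: "real \<Rightarrow> nat \<Rightarrow> nat \<Rightarrow> nat \<Rightarrow> nat \<Rightarrow> nat \<Rightarrow> real" where
  "Tsum q n d h i j = (if h \<in> hrange d i j then
      (-1) ^ (i - h) * q ^ (j * (j + h - i) + ((i - h) choose 2))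
      * gbinom q i (int h) * gbinom q (d - h) (int j)
      * gbinom q (n - d - i + h) (int (n - d - j))
    else 0)"

definition Geig :: "real \<Rightarrow> nat \<Rightarrow> nat \<Rightarrow> nat \<Rightarrow> nat \<Rightarrow> real" where
  "Geig q n d j i = (\<Sum>h\<in>hrange d i j. Tsum q n d h i j)"

definition gexp :: "nat \<Rightarrow> nat \<Rightarrow> nat \<Rightarrow> nat \<Rightarrow> nat \<Rightarrow> real" where
  "gexp n d h i j = - ((real h)^2 / 2) + real h * (real n - real d - real j + 1/2)
     + real j * (real d - real j) + real i * (real i - 1) / 2
     + (real n - real d) * (real j - real i)"

end

theory Submission
  imports Defs
begin

(*
  For h in the summation range write T_h = (-1)^(i-h) |T_h|. Comparing consecutive summands
  through the recurrences of the Gaussian binomials shows that for q \<ge> 3 the magnitudes |T_h|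
  grow at least by the factor 4/3 from one h to the next, and even by 8/3 at the last step
  h_max - 1 \<rightarrow> h_max unless n = 2d and d - j \<le> i. The alternating sum G_j(i) of an increasing
  nonnegative sequence lies between its last term minus the one before and its last term, so
  |G_j(i)| is within the factor 1/4 (resp. 5/8) of |T_{h_max}|. Finally
  q^(l(m-l)) \<le> [m brack l] < 2 q^(l(m-l)), and at h = h_max one of the three Gaussian binomials
  in T_h is 1, so q^c \<le> |T_{h_max}| < 4 q^c.
*)

section \<open>Gaussian binomial coefficients\<close>

lemma pow_minus_one_pos: "(q::real) > 1 \<Longrightarrow> k \<ge> 1 \<Longrightarrow> 0 < q ^ k - 1"
  by (simp add: one_less_power)

lemma gbinom_Suc_lower:
  assumes "l < m"
  shows "gbinom q m (int (Suc l)) = gbinom q m (int l) * (q ^ (m - l) - 1) / (q ^ Suc l - 1)"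
proof -
  have "m - Suc l + 1 = m - l" using assms by simp
  then show ?thesis
    unfolding gbinom_def by (simp del: of_nat_Suc power_Suc add: prod.nat_ivl_Suc')
qed

lemma gbinom_Suc_upper:
  assumes q: "(q::real) > 1" and "l \<le> m"
  shows "gbinom q (Suc m) (int l) = gbinom q m (int l) * (q ^ Suc m - 1) / (q ^ (Suc m - l) - 1)"
  using assms(2)
proof (induction l)
  case 0
  have "q ^ Suc m - 1 \<noteq> 0" using pow_minus_one_pos[OF q, of "Suc m"] by simp
  then show ?case by (simp add: gbinom_def)
next
  case (Suc l)
  have "1 \<le> Suc m - l" "1 \<le> m - l" using Suc.prems by auto
  then have nz: "q ^ (Suc m - l) - 1 \<noteq> 0" "q ^ (m - l) - 1 \<noteq> 0"
    using pow_minus_one_pos[OF q] by (metis less_irrefl)+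
  have "gbinom q (Suc m) (int (Suc l))
      = gbinom q (Suc m) (int l) * (q ^ (Suc m - l) - 1) / (q ^ Suc l - 1)"
    using Suc.prems by (intro gbinom_Suc_lower) simp
  also have "\<dots> = gbinom q m (int l) * (q ^ Suc m - 1) / (q ^ Suc l - 1)"
    using Suc nz by simp
  also have "\<dots> = gbinom q m (int (Suc l)) * (q ^ Suc m - 1) / (q ^ (Suc m - Suc l) - 1)"
    using gbinom_Suc_lower[of l m q] Suc.prems nz by simp
  finally show ?case .
qed

lemma gbinom_Suc_upper_mult:
  assumes "(q::real) > 1" "l \<le> m"
  shows "gbinom q (Suc m) (int l) * (q ^ (Suc m - l) - 1) = gbinom q m (int l) * (q ^ Suc m - 1)"
proof -
  have "1 \<le> Suc m - l" using assms(2) by simp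
  then have "q ^ (Suc m - l) - 1 \<noteq> 0" using pow_minus_one_pos[OF assms(1)] by fastforce
  then show ?thesis using gbinom_Suc_upper[OF assms] by simp
qed

lemma gbinom_self: "(q::real) > 1 \<Longrightarrow> gbinom q m (int m) = 1"
proof (induction m)
  case 0 then show ?case by (simp add: gbinom_def)
next
  case (Suc m)
  have "q ^ Suc m - 1 \<noteq> 0" "q - 1 \<noteq> 0"
    using pow_minus_one_pos[OF Suc.prems, of "Suc m"] Suc.prems by auto
  then show ?case
    using Suc gbinom_Suc_lower[of m "Suc m" q] gbinom_Suc_upper[OF Suc.prems, of m m] by simp
qed

lemma gbinom_ge_power:
  assumes q: "(q::real) > 1" and "l \<le> m"
  shows "q ^ (l * (m - l)) \<le> gbinom q m (int l)"
  using assms(2)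
proof (induction m rule: dec_induct)
  case base
  then show ?case using gbinom_self[OF q] by simp
next
  case (step k)
  have "0 < q ^ (Suc k - l) - 1" using pow_minus_one_pos[OF q] step.hyps(1) by simp
  moreover have "q ^ l \<ge> 1" using q by simp
  moreover have "q ^ Suc k = q ^ l * q ^ (Suc k - l)"
    using step.hyps(1) by (simp flip: power_add)
  ultimately have ratio: "q ^ l \<le> (q ^ Suc k - 1) / (q ^ (Suc k - l) - 1)"
    by (simp add: le_divide_eq algebra_simps)
  have "q ^ (l * (Suc k - l)) = q ^ (l * (k - l)) * q ^ l"
    using step.hyps(1) by (simp add: Suc_diff_le power_add)
  also have "\<dots> \<le> gbinom q k (int l) * ((q ^ Suc k - 1) / (q ^ (Suc k - l) - 1))"
    using step.IH ratio q order_trans[OF zero_le_power step.IH] by (intro mult_mono) auto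
  finally show ?case using gbinom_Suc_upper[OF q step.hyps(1)] by simp
qed

lemma gbinom_pos:
  assumes "(q::real) > 1" "l \<le> m"
  shows "0 < gbinom q m (int l)"
  by (rule less_le_trans[OF _ gbinom_ge_power[OF assms]]) (use assms in simp)

lemma gbinom_upper_step_ineq:
  fixes L q x :: real
  assumes "1 \<le> L" "3 \<le> q" "1 \<le> x"
  shows "x * (L * q * x - 1) * (q * x + 1) \<le> L * q * x * (x + 1) * (q * x - 1)"
proof -
  have "1 \<le> (q - 2) * x" using mult_mono[of 1 "q - 2" 1 x] assms by simp
  then have "L * q \<le> L * q * ((q - 2) * x)" using assms by simp
  moreover have "0 \<le> q * x" using assms by simp
  ultimately have "0 \<le> L * q * (q - 2) * x + q * x - L * q + 1" by (simp add: mult.assoc)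
  then have "0 \<le> x * (L * q * (q - 2) * x + q * x - L * q + 1)" using assms by simp
  then show ?thesis by (simp add: algebra_simps)
qed

lemma gbinom_mult_pow_add_one_le:
  assumes q: "(q::real) \<ge> 3" and "l \<le> m"
  shows "gbinom q m (int l) * (q ^ (m - l) + 1) \<le> 2 * q ^ (l * (m - l)) * q ^ (m - l)"
  using assms(2)
proof (induction m rule: dec_induct)
  case base
  then show ?case using gbinom_self q by simp
next
  case (step k)
  have q1: "q > 1" using q by simp
  define x L P G where "x = q ^ (k - l)" and "L = q ^ l" and "P = q ^ (l * (k - l))"
    and "G = gbinom q k (int l)"
  have x: "1 \<le> x" "1 < q * x" "q ^ (Suc k - l) = q * x"
    using q step.hyps(1) by (simp_all add: x_def Suc_diff_le one_less_power flip: power_Suc)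
  have L: "1 \<le> L" "q ^ Suc k = L * (q * x)"
    using q step.hyps(1) by (simp_all add: L_def x_def Suc_diff_le flip: power_add power_Suc)
  have "q ^ (l * (Suc k - l)) = P * L"
    using step.hyps(1) by (simp add: P_def L_def Suc_diff_le power_add)
  moreover have "gbinom q (Suc k) (int l) = G * (L * (q * x) - 1) / (q * x - 1)"
    using gbinom_Suc_upper[OF q1 step.hyps(1)] x L by (simp add: G_def)
  moreover have "G * (L * (q * x) - 1) * (q * x + 1) \<le> 2 * P * L * (q * x) * (q * x - 1)"
  proof -
    have "0 \<le> (L * (q * x) - 1) * (q * x + 1)"
      using x L mult_mono[of 1 L 1 "q * x"] by simp
    then have "G * (x + 1) * ((L * (q * x) - 1) * (q * x + 1))
        \<le> 2 * P * x * ((L * (q * x) - 1) * (q * x + 1))"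
      using step.IH by (intro mult_right_mono) (simp_all add: G_def P_def x_def)
    also have "\<dots> \<le> 2 * P * (L * q * x * (x + 1) * (q * x - 1))"
      using gbinom_upper_step_ineq[OF L(1) q x(1)] q
      by (simp add: P_def mult.assoc mult_left_mono)
    finally have "(x + 1) * (G * (L * (q * x) - 1) * (q * x + 1))
        \<le> (x + 1) * (2 * P * L * (q * x) * (q * x - 1))"
      by (simp add: algebra_simps)
    then show ?thesis using x(1) by simp
  qed
  ultimately show ?case using x by (simp add: divide_le_eq)
qed

lemma gbinom_less_twice_power:
  assumes q: "(q::real) \<ge> 3" and "l \<le> m"
  shows "gbinom q m (int l) < 2 * q ^ (l * (m - l))"
proof -
  have "gbinom q m (int l) * q ^ (m - l) < gbinom q m (int l) * (q ^ (m - l) + 1)"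
    using gbinom_pos[OF _ assms(2)] q by simp
  with gbinom_mult_pow_add_one_le[OF assms]
  have "gbinom q m (int l) * q ^ (m - l) < 2 * q ^ (l * (m - l)) * q ^ (m - l)"
    by linarith
  then show ?thesis using q by simp
qed

section \<open>The summands of the eigenvalue\<close>

definition Tabs :: "real \<Rightarrow> nat \<Rightarrow> nat \<Rightarrow> nat \<Rightarrow> nat \<Rightarrow> nat \<Rightarrow> real" where
  "Tabs q n d h i j = q ^ (j * (j + h - i) + ((i - h) choose 2))
      * gbinom q i (int h) * gbinom q (d - h) (int j) * gbinom q (n - d - i + h) (int (n - d - j))"

lemma Tsum_eq_sign_Tabs:
  "h \<in> hrange d i j \<Longrightarrow> Tsum q n d h i j = (-1) ^ (i - h) * Tabs q n d h i j"
  by (simp add: Tsum_def Tabs_def mult.assoc)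

lemma Tabs_pos:
  assumes "(q::real) > 1" "h \<le> i" "i \<le> h + j" "h + j \<le> d" "2 * d \<le> n"
  shows "0 < Tabs q n d h i j"
proof -
  have "j \<le> d - h" "n - d - j \<le> n - d - i + h" using assms by auto
  then show ?thesis
    unfolding Tabs_def using assms by (intro mult_pos_pos zero_less_power gbinom_pos) auto
qed

lemma of_nat_choose_two: "real (a choose 2) = real a * (real a - 1) / 2"
  by (induction a) (simp_all add: numeral_2_eq_2 field_simps)

lemma powr_gexp_eq:
  assumes "(q::real) > 0" "h \<le> i" "i \<le> h + j" "h + j \<le> d" "2 * d \<le> n"
  shows "q powr gexp n d h i j = q ^ (j * (j + h - i) + ((i - h) choose 2))
      * q ^ (h * (i - h)) * q ^ (j * (d - h - j)) * q ^ ((n - d - j) * (j + h - i))"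
proof -
  define N where "N = j * (j + h - i) + ((i - h) choose 2) + h * (i - h) + j * (d - h - j)
    + (n - d - j) * (j + h - i)"
  have "real N = gexp n d h i j"
    using assms
    by (simp add: N_def gexp_def of_nat_choose_two of_nat_diff field_simps power2_eq_square)
  then have "q powr gexp n d h i j = q ^ N"
    using assms(1) by (metis powr_realpow)
  then show ?thesis by (simp add: N_def power_add)
qed

lemma Tabs_bounds:
  assumes q: "(q::real) \<ge> 3" and h: "h \<le> i" "i \<le> h + j" "h + j \<le> d" and n: "2 * d \<le> n"
  shows "q powr gexp n d h i j \<le> Tabs q n d h i j"
    and "h = i \<or> h + j = d \<Longrightarrow> Tabs q n d h i j < 4 * q powr gexp n d h i j"
proof -
  have q1: "q > 1" using q by simp
  define E B1 B2 B3 P1 P2 P3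
    where "E = q ^ (j * (j + h - i) + ((i - h) choose 2))"
      and "B1 = gbinom q i (int h)" and "B2 = gbinom q (d - h) (int j)"
      and "B3 = gbinom q (n - d - i + h) (int (n - d - j))"
      and "P1 = q ^ (h * (i - h))" and "P2 = q ^ (j * (d - h - j))"
      and "P3 = q ^ ((n - d - j) * (j + h - i))"
  have T: "Tabs q n d h i j = E * B1 * B2 * B3" by (simp add: Tabs_def E_def B1_def B2_def B3_def)
  have G: "q powr gexp n d h i j = E * P1 * P2 * P3"
    using powr_gexp_eq[of q h i j d n] q h n by (simp add: E_def P1_def P2_def P3_def)
  have dims: "j \<le> d - h" "n - d - j \<le> n - d - i + h" "n - d - i + h - (n - d - j) = j + h - i"
    using h n by auto
  have lower: "P1 \<le> B1" "P2 \<le> B2" "P3 \<le> B3"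
    using gbinom_ge_power[OF q1 h(1)] gbinom_ge_power[OF q1 dims(1)]
      gbinom_ge_power[OF q1 dims(2), unfolded dims(3)]
    by (simp_all add: B1_def B2_def B3_def P1_def P2_def P3_def diff_commute)
  have upper: "B1 < 2 * P1" "B2 < 2 * P2" "B3 < 2 * P3"
    using gbinom_less_twice_power[OF q h(1)] gbinom_less_twice_power[OF q dims(1)]
      gbinom_less_twice_power[OF q dims(2), unfolded dims(3)]
    by (simp_all add: B1_def B2_def B3_def P1_def P2_def P3_def diff_commute)
  have pos: "0 < E" "0 < P1" "0 < P2" "0 < P3" using q by (simp_all add: E_def P1_def P2_def P3_def)
  show "q powr gexp n d h i j \<le> Tabs q n d h i j"
    unfolding T G using lower pos by (intro mult_mono) auto
  assume "h = i \<or> h + j = d"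
  then show "Tabs q n d h i j < 4 * q powr gexp n d h i j"
  proof
    assume "h = i"
    then have "B1 = 1" "P1 = 1" using gbinom_self[OF q1] by (simp_all add: B1_def P1_def)
    moreover have "B2 * B3 < (2 * P2) * (2 * P3)"
      using upper lower pos by (intro mult_strict_mono) auto
    ultimately show ?thesis unfolding T G using pos by (simp add: mult.assoc)
  next
    assume "h + j = d"
    then have "d - h = j" by simp
    then have "B2 = 1" "P2 = 1" using gbinom_self[OF q1] by (simp_all add: B2_def P2_def)
    moreover have "B1 * B3 < (2 * P1) * (2 * P3)"
      using upper lower pos by (intro mult_strict_mono) auto
    ultimately show ?thesis unfolding T G using pos by (simp add: mult.assoc mult.left_commute)
  qed
qed

lemma Tabs_exponent_Suc:
  assumes "Suc p \<le> i" "i \<le> p + j"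
  shows "j * (j + p - i) + ((i - p) choose 2) + j
    = j * (j + Suc p - i) + ((i - Suc p) choose 2) + (i - p - 1)"
proof -
  define a where "a = i - Suc p"
  have a: "i - p = Suc a" "i - Suc p = a" "i - p - 1 = a" using assms by (auto simp: a_def)
  have "j + Suc p - i = Suc (j + p - i)" using assms by auto
  then show ?thesis unfolding a by (simp add: numeral_2_eq_2)
qed

lemma Tabs_Suc_ratio:
  assumes q: "(q::real) > 1" and p: "Suc p \<le> i" "i \<le> p + j" "Suc p + j \<le> d" and n: "2 * d \<le> n"
  shows "Tabs q n d p i j
      * ((q ^ (i - p) - 1) * (q ^ (d - p - j) - 1) * (q ^ (n - d - i + p + 1) - 1) * q ^ j)
    = Tabs q n d (Suc p) i j
      * (q ^ (i - p - 1) * (q ^ Suc p - 1) * (q ^ (d - p) - 1) * (q ^ (j + p + 1 - i) - 1))"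
proof -
  have r1: "gbinom q i (int p) * (q ^ (i - p) - 1) = gbinom q i (int (Suc p)) * (q ^ Suc p - 1)"
    using gbinom_Suc_lower[of p i q] pow_minus_one_pos[OF q, of "Suc p"] p by simp
  have r2: "gbinom q (d - p) (int j) * (q ^ (d - p - j) - 1)
      = gbinom q (d - Suc p) (int j) * (q ^ (d - p) - 1)"
  proof -
    have e: "d - p = Suc (d - Suc p)" "j \<le> d - Suc p" using p by auto
    show ?thesis unfolding e(1) using gbinom_Suc_upper_mult[OF q e(2)] .
  qed
  have r3: "gbinom q (n - d - i + p) (int (n - d - j)) * (q ^ (n - d - i + p + 1) - 1)
      = gbinom q (n - d - i + Suc p) (int (n - d - j)) * (q ^ (j + p + 1 - i) - 1)"
  proof -
    have e: "n - d - i + Suc p = Suc (n - d - i + p)" "n - d - i + p + 1 = Suc (n - d - i + p)"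
      "Suc (n - d - i + p) - (n - d - j) = j + p + 1 - i" "n - d - j \<le> n - d - i + p"
      using p n by auto
    show ?thesis unfolding e(1,2) using gbinom_Suc_upper_mult[OF q e(4)] unfolding e(3) by (rule sym)
  qed
  have r0: "q ^ (j * (j + p - i) + ((i - p) choose 2)) * q ^ j
      = q ^ (j * (j + Suc p - i) + ((i - Suc p) choose 2)) * q ^ (i - p - 1)"
    using Tabs_exponent_Suc[OF p(1,2)] by (simp flip: power_add)
  have "Tabs q n d p i j
      * ((q ^ (i - p) - 1) * (q ^ (d - p - j) - 1) * (q ^ (n - d - i + p + 1) - 1) * q ^ j)
    = (q ^ (j * (j + p - i) + ((i - p) choose 2)) * q ^ j)
      * (gbinom q i (int p) * (q ^ (i - p) - 1)) * (gbinom q (d - p) (int j) * (q ^ (d - p - j) - 1))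
      * (gbinom q (n - d - i + p) (int (n - d - j)) * (q ^ (n - d - i + p + 1) - 1))"
    unfolding Tabs_def by (simp only: mult_ac)
  also have "\<dots> = Tabs q n d (Suc p) i j
      * (q ^ (i - p - 1) * (q ^ Suc p - 1) * (q ^ (d - p) - 1) * (q ^ (j + p + 1 - i) - 1))"
    unfolding r0 r1 r2 r3 Tabs_def by (simp only: mult_ac)
  finally show ?thesis .
qed

lemma le_mult_of_mult_eq:
  fixes x y a b c :: real
  assumes "x * a = y * b" "b \<le> c * a" "0 < a" "0 \<le> y"
  shows "x \<le> c * y"
proof -
  have "x * a \<le> (c * y) * a"
    using mult_left_mono[OF assms(2,4)] assms(1) by (simp add: mult_ac)
  then show ?thesis using assms(3) by simp
qed

lemma pow_minus_one_ge:
  assumes "(q::real) \<ge> 3" "1 \<le> a"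
  shows "2/3 * q ^ a \<le> q ^ a - 1"
proof -
  have "q ^ 1 \<le> q ^ a" using assms by (intro power_increasing) auto
  then show ?thesis using assms by simp
qed

lemma prod_pow_minus_one_ge:
  assumes "(q::real) \<ge> 3" "1 \<le> a" "1 \<le> b" "1 \<le> c"
  shows "8/27 * q ^ (a + b + c) \<le> (q ^ a - 1) * (q ^ b - 1) * (q ^ c - 1)"
proof -
  have "(2/3 * q ^ a) * (2/3 * q ^ b) * (2/3 * q ^ c) \<le> (q ^ a - 1) * (q ^ b - 1) * (q ^ c - 1)"
    using pow_minus_one_ge[OF assms(1)] assms by (intro mult_mono) auto
  then show ?thesis by (simp add: power_add algebra_simps)
qed

lemma prod_pow_minus_one_le:
  assumes "(q::real) \<ge> 1"
  shows "(q ^ a - 1) * (q ^ b - 1) * (q ^ c - 1) \<le> q ^ (a + b + c)"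
proof -
  have "(q ^ a - 1) * (q ^ b - 1) * (q ^ c - 1) \<le> q ^ a * q ^ b * q ^ c"
    using assms by (intro mult_mono) auto
  then show ?thesis by (simp add: power_add)
qed

lemma pow_add_minus_one_le:
  assumes "(q::real) \<ge> 3" "1 \<le> u"
  shows "q ^ (u + k) - 1 \<le> 3/2 * q ^ k * (q ^ u - 1)"
proof -
  have "q ^ k * 2/3 * q ^ u \<le> q ^ k * (q ^ u - 1)"
    using pow_minus_one_ge[OF assms] assms(1) by simp
  moreover have "1 \<le> q ^ k" using assms(1) by simp
  ultimately show ?thesis by (simp add: power_add algebra_simps)
qed

text \<open>The ratio of consecutive summands in the case n = 2d, p + 1 + j = d, with
  u = i - p, k = d - i and m = p + 1.\<close>

lemma boundary_ratio_ineq: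
  fixes q :: real
  assumes q: "q \<ge> 3" and u: "1 \<le> u" and k: "1 \<le> k"
  shows "q ^ (u - 1) * (q ^ m - 1) * (q ^ (u + k) - 1) * (q ^ k - 1)
    \<le> 3/4 * ((q ^ u - 1) * (q - 1) * (q ^ (m + k) - 1) * q ^ (u + k - 1))"
proof -
  define X where "X = (q ^ u - 1) * (q - 1) * (q ^ (m + k) - 1)"
  have pows: "q ^ (u - 1) * q ^ k = q ^ (u + k - 1)" "q ^ (k - 1) * q = q ^ k"
    using u k by (simp_all flip: power_add power_Suc2)
  have i1: "(q ^ m - 1) * q ^ k \<le> q ^ (m + k) - 1"
    using q by (simp add: power_add algebra_simps)
  have i2: "q ^ (u + k) - 1 \<le> 3/2 * q ^ k * (q ^ u - 1)"
    using pow_add_minus_one_le[OF q u] .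
  have i3: "q ^ k - 1 \<le> 3/2 * q ^ (k - 1) * (q - 1)"
    using pow_add_minus_one_le[OF q order_refl, of "k - 1"] k by simp
  have nonneg: "0 \<le> q ^ a - 1" for a using q by simp
  have "q ^ k * (q ^ (u - 1) * (q ^ m - 1) * (q ^ (u + k) - 1) * (q ^ k - 1))
      = q ^ (u - 1) * ((q ^ m - 1) * q ^ k) * (q ^ (u + k) - 1) * (q ^ k - 1)"
    by (simp add: mult_ac)
  also have "\<dots> \<le> q ^ (u - 1) * (q ^ (m + k) - 1) * (3/2 * q ^ k * (q ^ u - 1))
      * (3/2 * q ^ (k - 1) * (q - 1))"
    using i1 i2 i3 nonneg q by (intro mult_mono mult_left_mono) auto
  also have "\<dots> = 3/4 * X * q ^ (u + k - 1) * (3 * q ^ (k - 1))"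
  proof -
    have "\<And>a b c M U W :: real.
        a * M * (3/2 * b * U) * (3/2 * c * W) = 3/4 * (U * W * M) * (a * b) * (3 * c)"
      by (simp add: algebra_simps)
    then show ?thesis unfolding X_def pows(1)[symmetric] .
  qed
  also have "\<dots> \<le> 3/4 * X * q ^ (u + k - 1) * q ^ k"
    using q nonneg[of u] nonneg[of 1] nonneg[of "m + k"] unfolding pows(2)[symmetric] X_def
    by (intro mult_left_mono) auto
  finally have "q ^ k * (q ^ (u - 1) * (q ^ m - 1) * (q ^ (u + k) - 1) * (q ^ k - 1))
      \<le> q ^ k * (3/4 * (X * q ^ (u + k - 1)))"
    by (simp only: mult_ac)
  then show ?thesis using q unfolding X_def by (simp only: mult_le_cancel_left_pos zero_less_power)
qed

lemma Tabs_le_Tabs_Suc_interior: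
  assumes q: "(q::real) \<ge> 3" and p: "Suc p \<le> i" "i \<le> p + j" "Suc p + j \<le> d"
    and n: "2 * d \<le> n" "p + d + j + 2 \<le> n"
  shows "Tabs q n d p i j \<le> 3/8 * Tabs q n d (Suc p) i j"
proof (rule le_mult_of_mult_eq[OF Tabs_Suc_ratio])
  have "(q ^ (i - p) - 1) * (q ^ (d - p - j) - 1) * (q ^ (n - d - i + p + 1) - 1) * q ^ j
      \<ge> 8/27 * q ^ ((i - p) + (d - p - j) + (n - d - i + p + 1)) * q ^ j"
    by (rule mult_right_mono[OF prod_pow_minus_one_ge[OF q]]) (use p q in auto)
  also have "8/27 * q ^ ((i - p) + (d - p - j) + (n - d - i + p + 1)) * q ^ j
      = 8/27 * q ^ (n - p - d - j) * q ^ (d + j + 1)"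
    using p n by (simp flip: power_add)
  also have "\<dots> \<ge> 8/27 * 9 * q ^ (d + j + 1)"
  proof -
    have "q ^ 2 \<le> q ^ (n - p - d - j)" using q n by (intro power_increasing) auto
    moreover have "(3::real) ^ 2 \<le> q ^ 2" using q by (intro power_mono) auto
    ultimately have "9 \<le> q ^ (n - p - d - j)" by simp
    then show ?thesis using q by (simp add: mult_right_mono)
  qed
  moreover have "q ^ (i - p - 1) * (q ^ Suc p - 1) * (q ^ (d - p) - 1) * (q ^ (j + p + 1 - i) - 1)
      \<le> q ^ (i - p - 1) * q ^ (Suc p + (d - p) + (j + p + 1 - i))"
    unfolding mult.assoc[of "q ^ (i - p - 1)"]
    by (rule mult_left_mono[OF prod_pow_minus_one_le]) (use q in auto)
  moreover have "q ^ (i - p - 1) * q ^ (Suc p + (d - p) + (j + p + 1 - i)) = q ^ (d + j + 1)"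
    using p by (simp flip: power_add)
  ultimately show "q ^ (i - p - 1) * (q ^ Suc p - 1) * (q ^ (d - p) - 1) * (q ^ (j + p + 1 - i) - 1)
      \<le> 3/8 * ((q ^ (i - p) - 1) * (q ^ (d - p - j) - 1) * (q ^ (n - d - i + p + 1) - 1) * q ^ j)"
    by linarith
  show "0 < (q ^ (i - p) - 1) * (q ^ (d - p - j) - 1) * (q ^ (n - d - i + p + 1) - 1) * q ^ j"
    using p q by (intro mult_pos_pos pow_minus_one_pos zero_less_power) auto
  show "0 \<le> Tabs q n d (Suc p) i j" using Tabs_pos[of q "Suc p" i j d n] p q n by simp
qed (use q p n in auto)

lemma Tabs_le_Tabs_Suc:
  assumes q: "(q::real) \<ge> 3" and p: "Suc p \<le> i" "i \<le> p + j" "Suc p + j \<le> d" and n: "2 * d \<le> n"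
  shows "Tabs q n d p i j \<le> 3/4 * Tabs q n d (Suc p) i j"
proof -
  have q1: "q > 1" using q by simp
  have Tabs_Suc: "0 < Tabs q n d (Suc p) i j" using Tabs_pos[OF q1, of "Suc p" i j d n] p n by simp
  show ?thesis
  proof (cases "p + d + j + 2 \<le> n")
    case True
    then show ?thesis using Tabs_le_Tabs_Suc_interior[OF q p n True] Tabs_Suc by simp
  next
    case False
    then have boundary: "n = 2 * d" "Suc p + j = d" using p n by auto
    define u k where "u = i - p" and "k = j + p + 1 - i"
    have uk: "1 \<le> u" "1 \<le> k" using p by (auto simp: u_def k_def)
    have "i - p = u" "d - p - j = 1" "n - d - i + p + 1 = Suc p + k" "j = u + k - 1"
      "i - p - 1 = u - 1" "d - p = u + k" "j + p + 1 - i = k"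
      using p boundary by (auto simp: u_def k_def)
    then have e: "q ^ (i - p) = q ^ u" "q ^ (d - p - j) = q" "q ^ (n - d - i + p + 1) = q ^ (Suc p + k)"
      "q ^ j = q ^ (u + k - 1)" "q ^ (i - p - 1) = q ^ (u - 1)" "q ^ (d - p) = q ^ (u + k)"
      "q ^ (j + p + 1 - i) = q ^ k"
      by (metis power_one_right)+
    show ?thesis
    proof (rule le_mult_of_mult_eq[OF Tabs_Suc_ratio[OF q1 p n]])
      show "q ^ (i - p - 1) * (q ^ Suc p - 1) * (q ^ (d - p) - 1) * (q ^ (j + p + 1 - i) - 1)
        \<le> 3/4 * ((q ^ (i - p) - 1) * (q ^ (d - p - j) - 1) * (q ^ (n - d - i + p + 1) - 1) * q ^ j)"
        unfolding e using boundary_ratio_ineq[OF q uk] .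
      show "0 < (q ^ (i - p) - 1) * (q ^ (d - p - j) - 1) * (q ^ (n - d - i + p + 1) - 1) * q ^ j"
        unfolding e using q uk by (intro mult_pos_pos pow_minus_one_pos zero_less_power) auto
    qed (use Tabs_Suc in simp)
  qed
qed

section \<open>Alternating sums\<close>

definition alt_sum :: "(nat \<Rightarrow> real) \<Rightarrow> nat \<Rightarrow> nat \<Rightarrow> real" where
  "alt_sum t lo h = (\<Sum>x\<in>{lo..h}. (-1) ^ (h - x) * t x)"

lemma alt_sum_Suc:
  assumes "lo \<le> Suc h"
  shows "alt_sum t lo (Suc h) = t (Suc h) - alt_sum t lo h"
proof -
  have "alt_sum t lo (Suc h) = t (Suc h) + (\<Sum>x\<in>{lo..h}. (-1) ^ (Suc h - x) * t x)"
    using assms by (simp add: alt_sum_def sum.nat_ivl_Suc')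
  also have "(\<Sum>x\<in>{lo..h}. (-1) ^ (Suc h - x) * t x) = - alt_sum t lo h"
    unfolding alt_sum_def sum_negf[symmetric] by (rule sum.cong) (auto simp: Suc_diff_le)
  finally show ?thesis by simp
qed

lemma alt_sum_bounds:
  assumes "lo \<le> h" "0 \<le> t lo" and mono: "\<And>x. lo \<le> x \<Longrightarrow> x < h \<Longrightarrow> t x \<le> t (Suc x)"
  shows "0 \<le> alt_sum t lo h \<and> alt_sum t lo h \<le> t h"
  using assms(1) mono
proof (induction h rule: dec_induct)
  case base
  then show ?case using assms(2) by (simp add: alt_sum_def)
next
  case (step k)
  then have "0 \<le> alt_sum t lo k" "alt_sum t lo k \<le> t k" "t k \<le> t (Suc k)" by auto
  then show ?case using step.hyps(1) by (simp add: alt_sum_Suc)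
qed

lemma alt_sum_ge:
  assumes "lo \<le> h" "0 \<le> t lo" and mono: "\<And>x. lo \<le> x \<Longrightarrow> x < h \<Longrightarrow> t x \<le> t (Suc x)"
    and last_step: "lo < h \<Longrightarrow> t (h - 1) \<le> c * t h" and "0 \<le> c"
  shows "(1 - c) * t h \<le> alt_sum t lo h"
proof (cases "lo < h")
  case True
  then obtain k where k: "h = Suc k" "lo \<le> k" by (cases h) auto
  have "alt_sum t lo k \<le> t k" using alt_sum_bounds[of lo k t] assms(2) mono k by auto
  then show ?thesis using k last_step[OF True] by (simp add: alt_sum_Suc algebra_simps)
next
  case False
  then have "h = lo" using assms(1) by simp
  then show ?thesis using assms(2,5) by (simp add: alt_sum_def algebra_simps)
qed

lemma Geig_eq_alt_sum:
  "Geig q n d j i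
    = (-1) ^ (i - min i (d - j)) * alt_sum (\<lambda>h. Tabs q n d h i j) (i - j) (min i (d - j))"
  unfolding Geig_def alt_sum_def sum_distrib_left
proof (rule sum.cong)
  fix h assume h: "h \<in> {i - j..min i (d - j)}"
  then have "i - h = (i - min i (d - j)) + (min i (d - j) - h)" by auto
  then have "(-1::real) ^ (i - h) = (-1) ^ (i - min i (d - j)) * (-1) ^ (min i (d - j) - h)"
    by (simp only: power_add)
  then show "Tsum q n d h i j
      = (-1) ^ (i - min i (d - j)) * ((-1) ^ (min i (d - j) - h) * Tabs q n d h i j)"
    using h by (simp add: Tsum_eq_sign_Tabs hrange_def)
qed (simp add: hrange_def)

lemma abs_Geig_bounds:
  fixes q :: real
  assumes q: "q \<ge> 3" and dims: "i \<le> d" "j \<le> d" "2 * d \<le> n"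
  defines "h0 \<equiv> min i (d - j)"
  shows "\<bar>Geig q n d j i\<bar> \<le> Tabs q n d h0 i j"
    and "1/4 * Tabs q n d h0 i j \<le> \<bar>Geig q n d j i\<bar>"
    and "\<not> (n = 2 * d \<and> d - j \<le> i) \<Longrightarrow> 5/8 * Tabs q n d h0 i j \<le> \<bar>Geig q n d j i\<bar>"
proof -
  define t where "t = (\<lambda>h. Tabs q n d h i j)"
  have lo: "i - j \<le> h0" using dims by (auto simp: h0_def)
  have range: "h \<le> i" "i \<le> h + j" "h + j \<le> d" if "i - j \<le> h" "h \<le> h0" for h
    using that dims by (auto simp: h0_def)
  have pos: "0 < t h" if "i - j \<le> h" "h \<le> h0" for h
    using Tabs_pos[of q h i j d n] range[OF that] q dims by (simp add: t_def)
  have step: "t h \<le> 3/4 * t (Suc h)" if "i - j \<le> h" "h < h0" for h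
    using Tabs_le_Tabs_Suc[OF q _ _ _ dims(3), of h i j] range[of "Suc h"] that by (simp add: t_def)
  have mono: "t h \<le> t (Suc h)" if "i - j \<le> h" "h < h0" for h
    using step[OF that] pos[of "Suc h"] that by simp
  have nonneg: "0 \<le> t (i - j)" using pos[OF order_refl lo] by simp
  have abs_G: "\<bar>Geig q n d j i\<bar> = alt_sum t (i - j) h0"
    and upper: "alt_sum t (i - j) h0 \<le> t h0"
    using alt_sum_bounds[OF lo nonneg mono] Geig_eq_alt_sum[of q n d j i, folded t_def h0_def]
    by (auto simp: abs_mult)
  note lower = alt_sum_ge[OF lo nonneg mono]
  show "\<bar>Geig q n d j i\<bar> \<le> Tabs q n d h0 i j" using abs_G upper by (simp add: t_def)
  show "1/4 * Tabs q n d h0 i j \<le> \<bar>Geig q n d j i\<bar>"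
    using lower[of "3/4"] step[of "h0 - 1"] abs_G by (simp add: t_def)
  assume not_boundary: "\<not> (n = 2 * d \<and> d - j \<le> i)"
  have "t (h0 - 1) \<le> 3/8 * t h0" if "i - j < h0"
  proof -
    have p: "Suc (h0 - 1) \<le> i" "i \<le> (h0 - 1) + j" "Suc (h0 - 1) + j \<le> d" "Suc (h0 - 1) = h0"
      using that dims by (auto simp: h0_def)
    have "h0 - 1 + d + j + 2 \<le> n" using not_boundary p dims by (auto simp: h0_def)
    from Tabs_le_Tabs_Suc_interior[OF q p(1-3) dims(3) this] show ?thesis
      unfolding t_def p(4) by simp
  qed
  then show "5/8 * Tabs q n d h0 i j \<le> \<bar>Geig q n d j i\<bar>"
    using lower[of "3/8"] abs_G by (simp add: t_def)
qed

theorem lemma3p2: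
  fixes q n d i j :: nat
  assumes "primepow q" and "q \<ge> 3"
    and "n \<ge> 2 * d" and "2 * d \<ge> 2"
    and "i \<le> d" and "1 \<le> j" and "j \<le> d"
  shows "(\<not> (n = 2 * d \<and> d - j \<le> i) \<longrightarrow>
           4/9 * real q powr gexp n d (min i (d - j)) i j < \<bar>Geig (real q) n d j i\<bar>
         \<and> \<bar>Geig (real q) n d j i\<bar> < 4 * real q powr gexp n d (min i (d - j)) i j)
       \<and> ((n = 2 * d \<and> d - j \<le> i) \<longrightarrow>
           1 \<ge> \<bar>Geig (real q) n d j i\<bar> / \<bar>Tsum (real q) n d (d - j) i j\<bar>
         \<and> \<bar>Geig (real q) n d j i\<bar> / \<bar>Tsum (real q) n d (d - j) i j\<bar> \<ge> 5/32)"
proof -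
  have q: "real q \<ge> 3" using assms(2) by simp
  define h0 where "h0 = min i (d - j)"
  have h0: "h0 \<le> i" "i \<le> h0 + j" "h0 + j \<le> d" "h0 = i \<or> h0 + j = d"
    using assms by (auto simp: h0_def)
  note Geig_h0 = abs_Geig_bounds[OF q assms(5,7,3), folded h0_def]
  note Tabs_h0 = Tabs_bounds[OF q h0(1-3) assms(3)]
  have Tabs_h0_pos: "0 < Tabs (real q) n d h0 i j" using Tabs_pos[of "real q"] h0 q assms(3) by simp
  have "0 < real q powr gexp n d h0 i j" using q by simp
  moreover note Tabs_h0(1) Tabs_h0(2)[OF h0(4)] Geig_h0(1)
  moreover have "\<bar>Tsum (real q) n d (d - j) i j\<bar> = Tabs (real q) n d h0 i j"
    if "d - j \<le> i" using that h0 Tabs_h0_pos assms(7)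
    by (simp add: h0_def Tsum_eq_sign_Tabs hrange_def abs_mult)
  ultimately show ?thesis
    using Geig_h0(2,3) Tabs_h0_pos unfolding h0_def[symmetric]
    by (auto simp: divide_le_eq le_divide_eq)
qed

end
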